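(* Let $S>0$, $\zeta\in\{0,1\}$, $\phi\in\mathbb{R}$ and let $(u_n)_{n\in\mathbb{N}}$ be the $\phi$-market impact scenario defined below. Assume that for every $x\in\mathbb{R}$ the sequence $(s_n(x))_{n\in\mathbb{N}}$ is bounded. Then the following are equivalent: (i) $(u_n)$ is admissible from a trading perspective; (ii) $\phi\in(-\infty,1)$; (iii) there exists $R>0$ such that for every $x\in(-R,R)$, $\sum_{n\ge0}u_n(x)$ converges; (iv) there exists $R>0$ such that for every $x\in(-R,R)$, $\sum_{n\ge0}u_n(x)$ converges absolutely.
   Context: Fix $S>0$, $\zeta\in\{0,1\}$ and $\phi\in\mathbb{R}$. For $a,b\in\mathbb{R}$ write $a\vee b=\max(a,b)$. The $\phi$-market impact scenario starting from $x\in\mathbb{R}$ is the sequence of real-valued functions $(u_n)_{n\in\mathbb{N}}$ defined by $u_0(x)=x\vee(-S)$ and, for all $n\in\mathbb{N}$, $u_{n+1}(x)=\Big(\phi\big(1+\tfrac{s_n(x)}{S}\big)^{1+\zeta}u_n(x)\Big)\vee\big(-s_n(x)-S\big)$, where $s_n(x)=\sum_{k=0}^n u_k(x)$. The scenario is called admissible from a trading perspective if there exists $R>0$ such that for every $x\in(-R,R)$ the series $\sum_{n\ge0}u_n(x)$ converges. *)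

theory Defs
  imports "HOL-Analysis.Analysis"
begin

fun mi_pair :: "real \<Rightarrow> nat \<Rightarrow> real \<Rightarrow> real \<Rightarrow> nat \<Rightarrow> real \<times> real" where
  "mi_pair S \<zeta> \<phi> x 0 = (max x (-S), max x (-S))"
| "mi_pair S \<zeta> \<phi> x (Suc n) =
     (let (u, s) = mi_pair S \<zeta> \<phi> x n;
          u' = max (\<phi> * (1 + s / S) ^ (1 + \<zeta>) * u) (- s - S)
      in (u', s + u'))"

definition mi_u :: "real \<Rightarrow> nat \<Rightarrow> real \<Rightarrow> nat \<Rightarrow> real \<Rightarrow> real" where
  "mi_u S \<zeta> \<phi> n x = fst (mi_pair S \<zeta> \<phi> x n)"

definition mi_s :: "real \<Rightarrow> nat \<Rightarrow> real \<Rightarrow> nat \<Rightarrow> real \<Rightarrow> real" where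
  "mi_s S \<zeta> \<phi> n x = (\<Sum>k\<le>n. mi_u S \<zeta> \<phi> k x)"

definition admissible_trading :: "(nat \<Rightarrow> real \<Rightarrow> real) \<Rightarrow> bool" where
  "admissible_trading u \<longleftrightarrow> (\<exists>R>0. \<forall>x\<in>{-R<..<R}. summable (\<lambda>n. u n x))"

end

(* Put t n = 1 + s n / S \<ge> 0 and w n = u n / S, so that w (n+1) = max (\<phi> t n ^ (1+\<zeta>) w n) (- t n) and
   t (n+1) = t n + w (n+1). Under the boundedness hypothesis all four conditions hold, hence they are equivalent.
   At x = S we have u 0 > 0, and \<phi> \<ge> 1 would make the increments nondecreasing, so s n would grow linearly.
   For \<phi> \<ge> 0 the increments keep their sign, so bounded partial sums converge absolutely. For \<phi> < 0 the
   orbit either reaches 0 and stays there, or alternates with |w (n+1)| = |\<phi>| t n ^ (1+\<zeta>) |w n|. Then the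
   midpoints of consecutive values of t decrease (by AM-GM), which forces the steps to 0 and t n \<rightarrow> M.
   If |\<phi>| M ^ (1+\<zeta>) < 1 the two-step ratio is eventually below 1; otherwise the downward steps could only
   shrink by factors whose product stays positive (their squares are summable), although they tend to 0. *)

theory Submission
  imports Defs "HOL-Probability.Characteristic_Functions"
begin

lemma summable_abs_two_step_contraction:
  fixes a :: "nat \<Rightarrow> real"
  assumes "0 < \<rho>" "\<rho> < 1" and contr: "\<And>n. N \<le> n \<Longrightarrow> \<bar>a (n + 2)\<bar> \<le> \<rho> * \<bar>a n\<bar>"
  shows "summable (\<lambda>n. \<bar>a n\<bar>)"
proof -
  define r where "r = sqrt \<rho>"
  have r: "0 < r" "r < 1" "r * r = \<rho>" using assms by (auto simp: r_def real_sqrt_lt_1_iff)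
  define v where "v n = \<bar>a n\<bar> + \<bar>a (Suc n)\<bar> / r" for n
  \<comment> \<open>\<open>v\<close> satisfies a one-step ratio test with ratio \<open>r = sqrt \<rho>\<close>.\<close>
  have "summable v"
  proof (rule summable_ratio_test[of r N])
    fix n assume "N \<le> n"
    have "\<bar>a (Suc (Suc n))\<bar> \<le> r * r * \<bar>a n\<bar>"
      using contr[OF \<open>N \<le> n\<close>] r(3) by (simp add: numeral_2_eq_2)
    then have "\<bar>a (Suc (Suc n))\<bar> / r \<le> r * \<bar>a n\<bar>"
      using r(1) by (simp add: pos_divide_le_eq mult_ac)
    moreover have "0 \<le> v n" "0 \<le> v (Suc n)" using r by (auto simp: v_def)
    ultimately show "norm (v (Suc n)) \<le> r * norm (v n)"
      using r by (simp add: v_def distrib_left)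
  qed fact
  moreover have "\<bar>a n\<bar> \<le> v n" for n using r by (simp add: v_def)
  ultimately show ?thesis using summable_comparison_test[of "\<lambda>n. \<bar>a n\<bar>" v] by fastforce
qed

lemma exp_minus_twice_le_one_minus:
  fixes y :: real
  assumes "0 \<le> y" "y \<le> 1/2"
  shows "exp (- 2 * y) \<le> 1 - y"
proof -
  have "2 * y * y \<le> y" using assms mult_right_le_one_le[of y "2 * y"] by (simp add: mult_ac)
  then have "- 2 * y \<le> - y - 2 * y\<^sup>2" by (simp add: power2_eq_square)
  also have "\<dots> \<le> ln (1 - y)" using assms by (rule ln_one_minus_pos_lower_bound)
  finally show ?thesis using assms by (simp add: ln_ge_iff)
qed

lemma prod_one_minus_ge_exp_suminf:
  fixes y :: "nat \<Rightarrow> real"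
  assumes "summable y" and "\<And>i. 0 \<le> y i" and "\<And>i. y i \<le> 1/2"
  shows "exp (- 2 * suminf y) \<le> (\<Prod>i<n. 1 - y i)"
proof -
  have "exp (- 2 * suminf y) \<le> exp (\<Sum>i<n. - 2 * y i)"
    using sum_le_suminf[OF assms(1), of "{..<n}"] assms(2) by (simp add: sum_negf flip: sum_distrib_left)
  also have "\<dots> = (\<Prod>i<n. exp (- 2 * y i))" by (simp add: exp_sum)
  also have "\<dots> \<le> (\<Prod>i<n. 1 - y i)" using assms(2,3) by (intro prod_mono) (simp add: exp_minus_twice_le_one_minus[of "y _", simplified])
  finally show ?thesis .
qed

lemma power_Suc_diff_ge:
  fixes A c :: real
  assumes "z \<le> 1" "0 \<le> A" "0 \<le> c"
  shows "c * (A + c) ^ z \<le> (A + c) ^ Suc z - A ^ Suc z"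
  using assms by (cases z) (auto simp: power2_eq_square algebra_simps)

locale alternating_orbit =
  fixes q :: real and z :: nat and t w :: "nat \<Rightarrow> real" and T :: real
  assumes q_pos: "0 < q" and z_le_1: "z \<le> 1"
    and t_pos: "0 < t n" and t_le: "t n \<le> T"
    and w_Suc: "w (Suc n) = - q * t n ^ Suc z * w n"
    and t_Suc: "t (Suc n) = t n + w (Suc n)"
    and w_0_pos: "0 < w 0"
begin

definition down :: "nat \<Rightarrow> real" where "down i = - w (Suc (2 * i))"
definition up :: "nat \<Rightarrow> real" where "up i = w (Suc (Suc (2 * i)))"
definition mid :: "nat \<Rightarrow> real" where "mid i = (t (2 * i) + t (Suc (2 * i))) / 2"

lemma w_even_pos_odd_neg: "0 < w (2 * i) \<and> w (Suc (2 * i)) < 0"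
proof (induction i)
  case 0
  show ?case using w_0_pos w_Suc[of 0] q_pos t_pos[of 0] by (simp add: mult_pos_pos del: power_Suc)
next
  case (Suc i)
  have even: "0 < w (2 * Suc i)"
    using Suc w_Suc[of "Suc (2 * i)"] q_pos t_pos[of "Suc (2 * i)"]
    by (simp add: mult_pos_neg mult_neg_neg del: power_Suc)
  moreover have "w (Suc (2 * Suc i)) < 0"
    using even w_Suc[of "2 * Suc i"] q_pos t_pos[of "2 * Suc i"] by (simp add: mult_pos_pos del: power_Suc)
  ultimately show ?case by blast
qed

lemma down_pos: "0 < down i"
  using w_even_pos_odd_neg[of i] by (simp add: down_def)

lemma up_pos: "0 < up i"
  using w_even_pos_odd_neg[of "Suc i"] by (simp add: up_def)

lemma t_odd: "t (Suc (2 * i)) = t (2 * i) - down i"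
  using t_Suc[of "2 * i"] by (simp add: down_def)

lemma t_even_Suc: "t (Suc (Suc (2 * i))) = t (Suc (2 * i)) + up i"
  using t_Suc[of "Suc (2 * i)"] by (simp add: up_def)

lemma up_eq: "up i = q * t (Suc (2 * i)) ^ Suc z * down i"
  using w_Suc[of "Suc (2 * i)"] by (simp add: down_def up_def del: power_Suc)

lemma down_Suc_eq: "down (Suc i) = q * t (Suc (Suc (2 * i))) ^ Suc z * up i"
  using w_Suc[of "Suc (Suc (2 * i))"] by (simp add: down_def up_def del: power_Suc)

lemma t_even_eq_mid: "t (2 * i) = mid i + down i / 2"
  using t_odd[of i] by (simp add: mid_def field_simps)

lemma t_odd_eq_mid: "t (Suc (2 * i)) = mid i - down i / 2"
  using t_odd[of i] by (simp add: mid_def field_simps)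

lemma mid_pos: "0 < mid i"
  using t_pos[of "2 * i"] t_pos[of "Suc (2 * i)"] by (simp add: mid_def)

text \<open>With \<open>y = q t (2i+1) ^ (z+1)\<close> we have \<open>down i = up i / y\<close>, and \<open>down (i+1) \<ge> y up i\<close> because
  \<open>t (2i+2) > t (2i+1)\<close>; AM-GM on \<open>up i / y + y up i\<close> then shows \<open>mid\<close> does not increase, and the
  exact gain in \<open>t (2i+2) ^ (z+1) - t (2i+1) ^ (z+1)\<close> gives the quantitative bound.\<close>
lemma mid_decrease: "q / 2 * up i ^ 2 * t (Suc (Suc (2 * i))) ^ z \<le> mid i - mid (Suc i)"
proof -
  define A where "A = t (Suc (2 * i))"
  define B where "B = t (Suc (Suc (2 * i)))"
  define y where "y = q * A ^ Suc z"
  have A0: "0 < A" using t_pos by (simp add: A_def)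
  have y0: "0 < y" using q_pos A0 by (simp add: y_def)
  have B: "B = A + up i" using t_even_Suc by (simp add: A_def B_def)
  have mid_diff: "mid i - mid (Suc i) = (down i + down (Suc i) - 2 * up i) / 2"
    using t_odd[of i] t_even_Suc[of i] t_odd[of "Suc i"] by (simp add: mid_def field_simps)
  have "up i = y * down i" using up_eq[of i] by (simp add: y_def A_def)
  then have down_i: "down i = up i / y" using y0 by (simp add: field_simps)
  have down_Suc: "down (Suc i) = q * B ^ Suc z * up i" using down_Suc_eq[of i] by (simp add: B_def)
  have "0 \<le> up i * (y - 1)\<^sup>2 / y" using y0 up_pos[of i] by simp
  also have "up i * (y - 1)\<^sup>2 / y = up i / y + y * up i - 2 * up i"
    using y0 by (simp add: field_simps power2_eq_square)
  finally have am_gm: "0 \<le> up i / y + y * up i - 2 * up i" .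
  have "q * up i * (up i * B ^ z) \<le> q * up i * (B ^ Suc z - A ^ Suc z)"
    using power_Suc_diff_ge[OF z_le_1, of A "up i"] A0 up_pos[of i] q_pos B
    by (intro mult_left_mono) auto
  also have "\<dots> = q * B ^ Suc z * up i - y * up i" by (simp add: y_def algebra_simps)
  finally have "q * up i ^ 2 * B ^ z \<le> q * B ^ Suc z * up i - y * up i"
    by (simp add: power2_eq_square mult_ac)
  with am_gm have "q * up i ^ 2 * B ^ z \<le> down i + down (Suc i) - 2 * up i"
    unfolding down_i down_Suc by linarith
  then show ?thesis unfolding mid_diff B_def by simp
qed

lemma mid_Suc_le: "mid (Suc i) \<le> mid i"
proof -
  have "0 \<le> q / 2 * up i ^ 2 * t (Suc (Suc (2 * i))) ^ z"
    using q_pos t_pos[of "Suc (Suc (2 * i))"] by simp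
  then show ?thesis using mid_decrease[of i] by linarith
qed

definition M :: real where "M = lim mid"

lemma mid_tendsto: "mid \<longlonglongrightarrow> M" and M_le_mid: "M \<le> mid i"
proof -
  have "decseq mid" by (rule decseq_SucI) (rule mid_Suc_le)
  then obtain L where "mid \<longlonglongrightarrow> L" "\<forall>i. L \<le> mid i"
    using decseq_convergent[of mid 0] mid_pos less_imp_le by blast
  moreover have "M = L" using limI[OF \<open>mid \<longlonglongrightarrow> L\<close>] by (simp add: M_def)
  ultimately show "mid \<longlonglongrightarrow> M" "M \<le> mid i" by auto
qed

lemma M_nonneg: "0 \<le> M"
  using LIMSEQ_le_const[OF mid_tendsto, of 0] mid_pos less_imp_le by blast

lemma up_tendsto_0: "up \<longlonglongrightarrow> 0"
proof -
  have bound: "up i ^ (2 + z) \<le> 2 / q * (mid i - mid (Suc i))" for i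
  proof -
    have "up i ^ z \<le> t (Suc (Suc (2 * i))) ^ z"
      using t_even_Suc[of i] t_pos[of "Suc (2 * i)"] up_pos[of i] by (intro power_mono) auto
    then have "q / 2 * up i ^ 2 * up i ^ z \<le> q / 2 * up i ^ 2 * t (Suc (Suc (2 * i))) ^ z"
      using q_pos by (intro mult_left_mono) auto
    then have "q / 2 * up i ^ 2 * up i ^ z \<le> mid i - mid (Suc i)"
      using mid_decrease[of i] by linarith
    then show ?thesis using q_pos by (simp add: field_simps power_add power2_eq_square)
  qed
  have "(\<lambda>i. mid i - mid (Suc i)) \<longlonglongrightarrow> 0"
    using tendsto_diff[OF mid_tendsto LIMSEQ_Suc[OF mid_tendsto]] by simp
  then have bound_tendsto: "(\<lambda>i. 2 / q * (mid i - mid (Suc i))) \<longlonglongrightarrow> 0"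
    by (rule tendsto_mult_right_zero)
  have "(\<lambda>i. up i ^ (2 + z)) \<longlonglongrightarrow> 0"
  proof (rule tendsto_sandwich[OF _ _ tendsto_const bound_tendsto])
    show "\<forall>\<^sub>F i in sequentially. 0 \<le> up i ^ (2 + z)" using up_pos by (simp add: less_imp_le)
  qed (use bound in simp)
  then have "(\<lambda>i. root (2 + z) (up i ^ (2 + z))) \<longlonglongrightarrow> root (2 + z) 0"
    by (rule tendsto_real_root)
  moreover have "root (2 + z) (up i ^ (2 + z)) = up i" for i
    using up_pos[of i] real_root_pos2[of "2 + z" "up i"] by (simp del: power_Suc)
  ultimately show ?thesis by simp
qed

lemma down_Suc_le: "down (Suc i) \<le> q * T ^ Suc z * up i"
proof -
  have "t (Suc (Suc (2 * i))) ^ Suc z \<le> T ^ Suc z"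
    using t_le t_pos less_imp_le by (intro power_mono) auto
  then show ?thesis using down_Suc_eq[of i] q_pos up_pos[of i] by (simp add: mult_right_mono del: power_Suc)
qed

lemma down_tendsto_0: "down \<longlonglongrightarrow> 0"
proof -
  have "(\<lambda>i. down (Suc i)) \<longlonglongrightarrow> 0"
  proof (rule tendsto_sandwich[OF _ _ tendsto_const tendsto_mult_right_zero[OF up_tendsto_0, of "q * T ^ Suc z"]])
    show "\<forall>\<^sub>F i in sequentially. 0 \<le> down (Suc i)" using down_pos by (simp add: less_imp_le)
  qed (use down_Suc_le in \<open>simp del: power_Suc\<close>)
  then show ?thesis by (rule LIMSEQ_imp_Suc)
qed

lemma t_tendsto: "t \<longlonglongrightarrow> M"
proof (rule limseq_even_odd)
  have half_down: "(\<lambda>i. down i / 2) \<longlonglongrightarrow> 0" using tendsto_divide[OF down_tendsto_0, of "\<lambda>_. 2" 2] by simp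
  show "(\<lambda>i. t (2 * i)) \<longlonglongrightarrow> M"
    unfolding t_even_eq_mid using tendsto_add[OF mid_tendsto half_down] by simp
  show "(\<lambda>i. t (2 * i + 1)) \<longlonglongrightarrow> M"
    unfolding Suc_eq_plus1[symmetric] t_odd_eq_mid using tendsto_diff[OF mid_tendsto half_down] by simp
qed

lemma summable_abs_w_if_limit_ratio_less_1:
  assumes "q * M ^ Suc z < 1"
  shows "summable (\<lambda>n. \<bar>w n\<bar>)"
proof -
  define P where "P = q * M ^ Suc z"
  have P: "0 \<le> P" "P < 1" using assms q_pos M_nonneg by (auto simp: P_def)
  define \<rho> where "\<rho> = (1 + P) / 2"
  have "P * P \<le> P" using mult_left_le_one_le[of P P] P by simp
  then have \<rho>: "0 < \<rho>" "\<rho> < 1" "P * P < \<rho>" using P by (auto simp: \<rho>_def)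
  have "(\<lambda>n. (q * t n ^ Suc z) * (q * t (Suc n) ^ Suc z)) \<longlonglongrightarrow> P * P"
    unfolding P_def by (intro tendsto_mult tendsto_const tendsto_power t_tendsto LIMSEQ_Suc[OF t_tendsto])
  from order_tendstoD(2)[OF this \<rho>(3)]
  obtain N where N: "\<And>n. N \<le> n \<Longrightarrow> (q * t n ^ Suc z) * (q * t (Suc n) ^ Suc z) < \<rho>"
    by (auto simp: eventually_sequentially)
  show ?thesis
  proof (rule summable_abs_two_step_contraction[OF \<rho>(1,2)])
    fix n assume "N \<le> n"
    have "w (n + 2) = (q * t n ^ Suc z) * (q * t (Suc n) ^ Suc z) * w n"
      using w_Suc[of "Suc n"] w_Suc[of n] by (simp add: numeral_2_eq_2 del: power_Suc)
    then have "\<bar>w (n + 2)\<bar> = (q * t n ^ Suc z) * (q * t (Suc n) ^ Suc z) * \<bar>w n\<bar>"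
      using q_pos t_pos[of n] t_pos[of "Suc n"] by (simp add: abs_mult del: power_Suc)
    also have "\<dots> \<le> \<rho> * \<bar>w n\<bar>" using N[OF \<open>N \<le> n\<close>] by (intro mult_right_mono) auto
    finally show "\<bar>w (n + 2)\<bar> \<le> \<rho> * \<bar>w n\<bar>" .
  qed
qed

lemma M_le_t_even_Suc: "M + down (Suc i) / 2 \<le> t (Suc (Suc (2 * i)))"
  using t_even_eq_mid[of "Suc i"] M_le_mid[of "Suc i"] by simp

lemma up_square_summable:
  assumes "0 < M"
  shows "summable (\<lambda>i. up i ^ 2)"
proof (rule summable_comparison_test)
  show "summable (\<lambda>i. 2 / (q * M ^ z) * (mid i - mid (Suc i)))"
    by (intro summable_mult telescope_summable'[OF mid_tendsto])
  have "up i ^ 2 \<le> 2 / (q * M ^ z) * (mid i - mid (Suc i))" for i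
  proof -
    have "M ^ z \<le> t (Suc (Suc (2 * i))) ^ z"
      using M_le_t_even_Suc[of i] down_pos[of "Suc i"] assms by (intro power_mono) auto
    then have "q / 2 * up i ^ 2 * M ^ z \<le> q / 2 * up i ^ 2 * t (Suc (Suc (2 * i))) ^ z"
      using q_pos by (intro mult_left_mono) auto
    then have "q / 2 * up i ^ 2 * M ^ z \<le> mid i - mid (Suc i)" using mid_decrease[of i] by linarith
    moreover have "0 < q * M ^ z" using q_pos assms by simp
    ultimately have "up i ^ 2 * (q * M ^ z) \<le> 2 * (mid i - mid (Suc i))" by (simp add: mult_ac)
    then show ?thesis using \<open>0 < q * M ^ z\<close> by (simp add: pos_le_divide_eq mult_ac)
  qed
  then show "\<exists>N. \<forall>n\<ge>N. norm (up n ^ 2) \<le> 2 / (q * M ^ z) * (mid n - mid (Suc n))" by auto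
qed

lemma down_square_summable:
  assumes "0 < M"
  shows "summable (\<lambda>i. down i ^ 2)"
proof -
  have "summable (\<lambda>i. down (Suc i) ^ 2)"
  proof (rule summable_comparison_test)
    show "summable (\<lambda>i. (q * T ^ Suc z) ^ 2 * up i ^ 2)"
      by (intro summable_mult up_square_summable assms)
    have "down (Suc i) ^ 2 \<le> (q * T ^ Suc z) ^ 2 * up i ^ 2" for i
    proof -
      have "down (Suc i) ^ 2 \<le> (q * T ^ Suc z * up i) ^ 2"
        using down_Suc_le[of i] down_pos[of "Suc i"] by (intro power_mono) auto
      then show ?thesis by (simp only: power_mult_distrib)
    qed
    then show "\<exists>N. \<forall>n\<ge>N. norm (down (Suc n) ^ 2) \<le> (q * T ^ Suc z) ^ 2 * up n ^ 2" by auto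
  qed
  then show ?thesis by (rule summable_Suc_iff[THEN iffD1])
qed

lemma M_pos_if_limit_ratio_ge_1: "1 \<le> q * M ^ Suc z \<Longrightarrow> 0 < M"
  using M_nonneg by (cases "M = 0") auto

text \<open>When \<open>q M ^ (z+1) \<ge> 1\<close>, two steps multiply \<open>down\<close> by at least
  \<open>(1 + down (i+1) / 2M) ^ (z+1) (1 - down i / 2M) ^ (z+1)\<close>; the rescaling below absorbs the first
  factor, leaving the factor \<open>(1 - (down i / 2M)\<^sup>2) ^ (z+1)\<close> close to 1.\<close>
definition scaled_down :: "nat \<Rightarrow> real"
  where "scaled_down i = down i / (1 + down i / (2 * M)) ^ Suc z"

lemma scaled_down_pos: "0 < scaled_down i"
proof -
  have "0 < 1 + down i / (2 * M)" using down_pos[of i] M_nonneg by (simp add: add_pos_nonneg)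
  then show ?thesis using down_pos[of i] by (simp add: scaled_down_def del: power_Suc)
qed

lemma scaled_down_le_down: "scaled_down i \<le> down i"
proof -
  have "1 \<le> (1 + down i / (2 * M)) ^ Suc z"
    using down_pos[of i] M_nonneg by (intro one_le_power) simp
  then have "down i * 1 \<le> down i * (1 + down i / (2 * M)) ^ Suc z"
    using down_pos[of i] by (intro mult_left_mono) auto
  then show ?thesis using \<open>1 \<le> _\<close> by (simp add: scaled_down_def pos_divide_le_eq del: power_Suc)
qed

lemma scaled_down_growth:
  assumes big: "1 \<le> q * M ^ Suc z" and "down i \<le> 2 * M"
  shows "(1 - (down i / (2 * M))\<^sup>2) ^ Suc z * scaled_down i \<le> scaled_down (Suc i)"
proof -
  have M: "0 < M" using M_pos_if_limit_ratio_ge_1[OF big] .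
  define \<beta> where "\<beta> = down i / (2 * M)"
  define \<beta>' where "\<beta>' = down (Suc i) / (2 * M)"
  define A where "A = t (Suc (2 * i))"
  define B where "B = t (Suc (Suc (2 * i)))"
  have \<beta>: "0 < \<beta>" "\<beta> \<le> 1" "0 < \<beta>'" using down_pos assms M by (auto simp: \<beta>_def \<beta>'_def)
  have A: "M * (1 - \<beta>) \<le> A"
    using t_odd_eq_mid[of i] M_le_mid[of i] M by (simp add: A_def \<beta>_def algebra_simps)
  have B: "M * (1 + \<beta>') \<le> B"
    using M_le_t_even_Suc[of i] M by (simp add: B_def \<beta>'_def algebra_simps)
  have "(M * (1 + \<beta>')) ^ Suc z * (M * (1 - \<beta>)) ^ Suc z \<le> B ^ Suc z * A ^ Suc z"
    using A B M \<beta> t_pos[of "Suc (Suc (2 * i))"] by (intro mult_mono power_mono) (auto simp: B_def)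
  then have "(q * M ^ Suc z) * (q * M ^ Suc z) * ((1 + \<beta>') ^ Suc z * (1 - \<beta>) ^ Suc z)
      \<le> q * B ^ Suc z * (q * A ^ Suc z)"
    using q_pos by (simp add: power_mult_distrib mult_ac mult_left_mono del: power_Suc)
  moreover have "1 * ((1 + \<beta>') ^ Suc z * (1 - \<beta>) ^ Suc z)
      \<le> (q * M ^ Suc z) * (q * M ^ Suc z) * ((1 + \<beta>') ^ Suc z * (1 - \<beta>) ^ Suc z)"
    using big mult_mono[OF big big] \<beta> by (intro mult_right_mono) (auto simp del: power_Suc)
  ultimately have "(1 + \<beta>') ^ Suc z * (1 - \<beta>) ^ Suc z * down i \<le> down (Suc i)"
    using down_Suc_eq[of i] up_eq[of i] down_pos[of i]
    by (simp add: A_def B_def mult_right_mono mult_ac del: power_Suc)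
  moreover have "scaled_down (Suc i) = down (Suc i) / (1 + \<beta>') ^ Suc z"
    by (simp add: scaled_down_def \<beta>'_def)
  ultimately have growth: "(1 - \<beta>) ^ Suc z * down i \<le> scaled_down (Suc i)"
    using \<beta> by (simp add: pos_le_divide_eq mult_ac del: power_Suc)
  have "scaled_down i = down i / (1 + \<beta>) ^ Suc z"
    by (simp add: scaled_down_def \<beta>_def)
  moreover have "(1 - \<beta>\<^sup>2) ^ Suc z = (1 - \<beta>) ^ Suc z * (1 + \<beta>) ^ Suc z"
    unfolding power_mult_distrib[symmetric] by (simp add: power2_eq_square algebra_simps)
  ultimately have "(1 - \<beta>) ^ Suc z * down i = (1 - \<beta>\<^sup>2) ^ Suc z * scaled_down i"
    using \<beta> by (simp del: power_Suc)
  with growth show ?thesis by (simp add: \<beta>_def)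
qed

definition damping :: "nat \<Rightarrow> real"
  where "damping i = real (Suc z) * (down i / (2 * M))\<^sup>2"

lemma damping_le_half:
  assumes "down i < M"
  shows "damping i \<le> 1/2"
proof -
  have "(down i / (2 * M))\<^sup>2 \<le> (1/2)\<^sup>2"
    using assms down_pos[of i] by (intro power_mono) (auto simp: field_simps)
  moreover have "real (Suc z) \<le> 2" using z_le_1 by simp
  ultimately have "damping i \<le> 2 * (1/2)\<^sup>2" unfolding damping_def by (intro mult_mono) auto
  then show ?thesis by (simp add: power2_eq_square)
qed

lemma damping_summable: "0 < M \<Longrightarrow> summable damping"
  unfolding damping_def power_divide by (intro summable_mult summable_divide down_square_summable)

lemma scaled_down_step:
  assumes big: "1 \<le> q * M ^ Suc z" and "down i < M"
  shows "(1 - damping i) * scaled_down i \<le> scaled_down (Suc i)"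
proof -
  have "(down i / (2 * M))\<^sup>2 \<le> damping i"
    unfolding damping_def using mult_right_mono[of 1 "real (Suc z)" "(down i / (2 * M))\<^sup>2"] by simp
  also have "\<dots> \<le> 1" using damping_le_half[OF assms(2)] by simp
  finally have "1 - damping i \<le> (1 - (down i / (2 * M))\<^sup>2) ^ Suc z"
    using Bernoulli_inequality[of "- (down i / (2 * M))\<^sup>2" "Suc z"]
    by (simp add: damping_def del: power_Suc)
  then have "(1 - damping i) * scaled_down i \<le> (1 - (down i / (2 * M))\<^sup>2) ^ Suc z * scaled_down i"
    using scaled_down_pos less_imp_le by (intro mult_right_mono) auto
  also have "\<dots> \<le> scaled_down (Suc i)"
    using scaled_down_growth[OF big, of i] assms(2) down_pos[of i] by simp
  finally show ?thesis .
qed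

lemma down_eventually_bounded_below:
  assumes big: "1 \<le> q * M ^ Suc z"
  obtains \<epsilon> N where "0 < \<epsilon>" and "\<And>n. \<epsilon> \<le> down (N + n)"
proof -
  have M: "0 < M" using M_pos_if_limit_ratio_ge_1[OF big] .
  obtain N where N: "\<And>i. N \<le> i \<Longrightarrow> down i < M"
    using order_tendstoD(2)[OF down_tendsto_0 M] by (auto simp: eventually_sequentially)
  define y where "y j = damping (N + j)" for j
  have y_summable: "summable y"
    unfolding y_def by (subst add.commute) (rule summable_ignore_initial_segment[OF damping_summable[OF M]])
  have y_bounds: "0 \<le> y j" "y j \<le> 1/2" for j
    using damping_le_half N[of "N + j"] by (auto simp: y_def damping_def)
  have prod: "(\<Prod>j<n. 1 - y j) * scaled_down N \<le> scaled_down (N + n)" for n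
  proof (induction n)
    case (Suc n)
    have "(\<Prod>j<Suc n. 1 - y j) * scaled_down N \<le> (1 - y n) * scaled_down (N + n)"
      using Suc y_bounds[of n] by (simp add: mult_ac mult_left_mono)
    also have "\<dots> \<le> scaled_down (N + Suc n)"
      using scaled_down_step[OF big N[of "N + n"]] by (simp add: y_def)
    finally show ?case .
  qed simp
  show ?thesis
  proof
    show "0 < exp (- 2 * suminf y) * scaled_down N" using scaled_down_pos by simp
    fix n
    have "exp (- 2 * suminf y) * scaled_down N \<le> (\<Prod>j<n. 1 - y j) * scaled_down N"
      using prod_one_minus_ge_exp_suminf[OF y_summable y_bounds] scaled_down_pos less_imp_le
      by (intro mult_right_mono) auto
    also have "\<dots> \<le> down (N + n)" using prod[of n] scaled_down_le_down[of "N + n"] by linarith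
    finally show "exp (- 2 * suminf y) * scaled_down N \<le> down (N + n)" .
  qed
qed

lemma limit_ratio_less_1: "q * M ^ Suc z < 1"
proof (rule ccontr)
  assume "\<not> q * M ^ Suc z < 1"
  then have "1 \<le> q * M ^ Suc z" by simp
  then obtain \<epsilon> N where "0 < \<epsilon>" and bound: "\<And>n. \<epsilon> \<le> down (N + n)"
    using down_eventually_bounded_below by blast
  from order_tendstoD(2)[OF down_tendsto_0 \<open>0 < \<epsilon>\<close>] obtain n0 where "\<And>n. n0 \<le> n \<Longrightarrow> down n < \<epsilon>"
    by (auto simp: eventually_sequentially)
  then have "down (N + n0) < \<epsilon>" by simp
  with bound[of n0] show False by simp
qed

lemma summable_abs_w: "summable (\<lambda>n. \<bar>w n\<bar>)"
  using summable_abs_w_if_limit_ratio_less_1[OF limit_ratio_less_1] .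

end

lemma summable_abs_alternating:
  fixes t w :: "nat \<Rightarrow> real"
  assumes "0 < q" "z \<le> 1" "\<And>n. 0 < t n" "\<And>n. t n \<le> T"
    and w_Suc: "\<And>n. w (Suc n) = - q * t n ^ Suc z * w n"
    and "\<And>n. t (Suc n) = t n + w (Suc n)"
    and "w 0 \<noteq> 0"
  shows "summable (\<lambda>n. \<bar>w n\<bar>)"
proof (cases "0 < w 0")
  case True
  interpret alternating_orbit q z t w T using assms True by unfold_locales
  show ?thesis by (rule summable_abs_w)
next
  case False
  then have "w 0 < 0" using assms(7) by simp
  moreover have "0 < q * t 0 ^ Suc z" using assms(1,3) by simp
  ultimately have "q * t 0 ^ Suc z * w 0 < 0" by (intro mult_pos_neg)
  then have "0 < w (Suc 0)" using w_Suc[of 0] by simp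
  then interpret alternating_orbit q z "\<lambda>n. t (Suc n)" "\<lambda>n. w (Suc n)" T
    by unfold_locales (use assms in blast)+
  show ?thesis using summable_abs_w summable_Suc_iff[of "\<lambda>n. \<bar>w n\<bar>"] by simp
qed

locale market_impact =
  fixes S p :: real and z :: nat and u s :: "nat \<Rightarrow> real"
  assumes S_pos: "0 < S"
    and u_Suc: "u (Suc n) = max (p * (1 + s n / S) ^ (1 + z) * u n) (- s n - S)"
    and s_Suc: "s (Suc n) = s n + u (Suc n)"
    and s_0: "s 0 = u 0" and u_0_ge: "- S \<le> u 0"
begin

lemma s_ge_minus_S: "- S \<le> s n"
  by (cases n) (use s_0 u_0_ge s_Suc u_Suc in auto)

lemma sum_u_eq_s: "(\<Sum>i<Suc n. u i) = s n"
  by (induction n) (simp_all add: s_0 s_Suc)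

lemma u_Suc_eq_0: "u n = 0 \<or> s n = - S \<Longrightarrow> u (Suc n) = 0"
proof -
  assume "u n = 0 \<or> s n = - S"
  moreover have "- s n - S \<le> 0" using s_ge_minus_S[of n] by simp
  ultimately show ?thesis using u_Suc[of n] S_pos by auto
qed

lemma u_eventually_0:
  assumes "u n = 0 \<or> s n = - S" and "n < m"
  shows "u m = 0"
  using assms(2)
proof (induction m rule: less_induct)
  case (less m)
  then obtain m' where m': "m = Suc m'" by (cases m) auto
  show ?case
  proof (cases "n = m'")
    case False
    then have "u m' = 0" using less m' by auto
    then show ?thesis using u_Suc_eq_0 m' by blast
  qed (use assms(1) u_Suc_eq_0 m' in blast)
qed

lemma u_constant_sign:
  assumes "0 \<le> p"
  shows "(\<forall>n. 0 \<le> u n) \<or> (\<forall>n. u n \<le> 0)"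
proof -
  have base: "0 \<le> 1 + s n / S" for n using s_ge_minus_S[of n] S_pos by (simp add: field_simps)
  have "0 \<le> u n" if "0 \<le> u 0" for n
    by (induction n) (use that u_Suc base assms in \<open>auto intro!: max.coboundedI1\<close>)
  moreover have "u n \<le> 0" if "u 0 \<le> 0" for n
  proof (induction n)
    case (Suc n)
    have "p * (1 + s n / S) ^ (1 + z) * u n \<le> 0"
      using Suc assms base[of n] by (simp add: mult_nonneg_nonpos)
    then show ?case using u_Suc[of n] s_ge_minus_S[of n] by simp
  qed (use that in simp)
  ultimately show ?thesis by fastforce
qed

lemma summable_abs_u_if_phi_nonneg:
  assumes "0 \<le> p" and bounded: "bounded (range s)"
  shows "summable (\<lambda>n. \<bar>u n\<bar>)"
proof -
  obtain B where B: "\<And>n. \<bar>s n\<bar> \<le> B" using bounded by (auto simp: bounded_iff)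
  consider "\<forall>n. 0 \<le> u n" | "\<forall>n. u n \<le> 0" using u_constant_sign[OF assms(1)] by blast
  then have "(\<Sum>i<Suc n. \<bar>u i\<bar>) = \<bar>\<Sum>i<Suc n. u i\<bar>" for n
  proof cases
    case 1
    then have "(\<Sum>i<Suc n. \<bar>u i\<bar>) = (\<Sum>i<Suc n. u i)" by simp
    moreover have "0 \<le> (\<Sum>i<Suc n. u i)" using 1 by (simp add: sum_nonneg)
    ultimately show ?thesis by simp
  next
    case 2
    then have "(\<Sum>i<Suc n. \<bar>u i\<bar>) = - (\<Sum>i<Suc n. u i)" by (simp add: sum_negf)
    moreover have "(\<Sum>i<Suc n. u i) \<le> 0" using 2 by (intro sum_nonpos) auto
    ultimately show ?thesis by simp
  qed
  then have "(\<Sum>i<Suc n. \<bar>u i\<bar>) = \<bar>s n\<bar>" for n by (simp only: sum_u_eq_s)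
  moreover have "0 \<le> B" using B[of 0] abs_ge_zero order_trans by blast
  ultimately have "(\<Sum>i<n. \<bar>u i\<bar>) \<le> B" for n
    using B by (cases n) auto
  then show ?thesis by (intro summableI_nonneg_bounded) auto
qed

lemma summable_abs_u_if_phi_neg:
  assumes "p < 0" "z \<le> 1" and bounded: "bounded (range s)"
  shows "summable (\<lambda>n. \<bar>u n\<bar>)"
proof (cases "\<exists>n. u n = 0 \<or> s n = - S")
  case True
  then obtain n where "u n = 0 \<or> s n = - S" by blast
  then show ?thesis using u_eventually_0 by (intro summable_finite[of "{..n}"]) auto
next
  case False
  define t where "t n = 1 + s n / S" for n
  obtain B where B: "\<And>n. \<bar>s n\<bar> \<le> B" using bounded by (auto simp: bounded_iff)
  have t_pos: "0 < t n" for n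
  proof -
    have "- S < s n" using s_ge_minus_S[of n] False by (auto simp: less_le)
    then show ?thesis using S_pos by (simp add: t_def field_simps)
  qed
  \<comment> \<open>The second branch of the maximum would make \<open>s (n+1) = - S\<close>.\<close>
  have u_Suc': "u (Suc n) = p * t n ^ Suc z * u n" for n
  proof (rule ccontr)
    assume "u (Suc n) \<noteq> p * t n ^ Suc z * u n"
    then have "u (Suc n) = - s n - S" using u_Suc[of n] by (simp add: t_def max_def split: if_split_asm)
    then show False using False s_Suc[of n] by auto
  qed
  have "summable (\<lambda>n. \<bar>u n / S\<bar>)"
  proof (rule summable_abs_alternating[of "- p" z t "1 + B / S"])
    show "t n \<le> 1 + B / S" for n using B[of n] S_pos by (simp add: t_def divide_right_mono abs_le_iff)
    show "u (Suc n) / S = - (- p) * t n ^ Suc z * (u n / S)" for n using u_Suc'[of n] by simp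
    show "t (Suc n) = t n + u (Suc n) / S" for n using s_Suc[of n] by (simp add: t_def add_divide_distrib)
    show "u 0 / S \<noteq> 0" using False S_pos by auto
  qed (use assms t_pos in auto)
  then show ?thesis using summable_mult[of _ S] S_pos by (simp add: abs_div)
qed

lemma summable_abs_u:
  assumes "z \<le> 1" and "bounded (range s)"
  shows "summable (\<lambda>n. \<bar>u n\<bar>)"
  using assms summable_abs_u_if_phi_nonneg summable_abs_u_if_phi_neg by (cases "0 \<le> p") auto

lemma phi_less_1:
  assumes "0 < u 0" and bounded: "bounded (range s)"
  shows "p < 1"
proof (rule ccontr)
  assume "\<not> p < 1"
  have growth: "u 0 \<le> u n \<and> real (Suc n) * u 0 \<le> s n" for n
  proof (induction n)
    case (Suc n)
    have "0 \<le> real (Suc n) * u 0" using assms(1) by simp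
    then have "0 \<le> s n / S" using Suc S_pos by simp
    then have "1 \<le> (1 + s n / S) ^ (1 + z)" by (intro one_le_power) simp
    then have "1 * 1 \<le> p * (1 + s n / S) ^ (1 + z)"
      using \<open>\<not> p < 1\<close> by (intro mult_mono) auto
    then have "1 * u n \<le> p * (1 + s n / S) ^ (1 + z) * u n"
      using Suc assms(1) by (intro mult_right_mono) auto
    then have "u n \<le> u (Suc n)" using u_Suc[of n] by simp
    then show ?case using Suc s_Suc[of n] by (simp add: algebra_simps)
  qed (simp add: s_0)
  obtain B where B: "\<And>n. \<bar>s n\<bar> \<le> B" using bounded by (auto simp: bounded_iff)
  obtain n where "B / u 0 < real n" using reals_Archimedean2 by blast
  then have "B < real (Suc n) * u 0" using assms(1) by (simp add: field_simps)
  with growth[of n] B[of n] show False by (simp add: abs_le_iff)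
qed

end

lemma market_impact_mi:
  assumes "0 < S"
  shows "market_impact S \<phi> \<zeta> (\<lambda>n. mi_u S \<zeta> \<phi> n x) (\<lambda>n. mi_s S \<zeta> \<phi> n x)"
proof -
  have pair: "mi_pair S \<zeta> \<phi> x n = (mi_u S \<zeta> \<phi> n x, mi_s S \<zeta> \<phi> n x)" for n
  proof (induction n)
    case (Suc n)
    have "mi_s S \<zeta> \<phi> (Suc n) x = mi_s S \<zeta> \<phi> n x + mi_u S \<zeta> \<phi> (Suc n) x"
      by (simp add: mi_s_def)
    moreover have "mi_u S \<zeta> \<phi> (Suc n) x = fst (mi_pair S \<zeta> \<phi> x (Suc n))" by (simp add: mi_u_def)
    ultimately show ?case using Suc by (simp add: Let_def)
  qed (simp add: mi_u_def mi_s_def)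
  show ?thesis
  proof
    show "mi_u S \<zeta> \<phi> (Suc n) x = max (\<phi> * (1 + mi_s S \<zeta> \<phi> n x / S) ^ (1 + \<zeta>) * mi_u S \<zeta> \<phi> n x)
        (- mi_s S \<zeta> \<phi> n x - S)" for n
      unfolding mi_u_def by (simp only: mi_pair.simps(2)) (simp add: pair Let_def del: power_Suc)
  qed (simp_all add: assms mi_s_def mi_u_def)
qed

theorem theorem4p2:
  fixes S \<phi> :: real and \<zeta> :: nat
  assumes "S > 0" and "\<zeta> \<in> {0, 1}"
    and "\<forall>x::real. bounded (range (\<lambda>n. mi_s S \<zeta> \<phi> n x))"
  shows "(admissible_trading (mi_u S \<zeta> \<phi>) \<longleftrightarrow> \<phi> < 1)
       \<and> (\<phi> < 1 \<longleftrightarrow> (\<exists>R>0. \<forall>x\<in>{-R<..<R}. summable (\<lambda>n. mi_u S \<zeta> \<phi> n x)))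
       \<and> ((\<exists>R>0. \<forall>x\<in>{-R<..<R}. summable (\<lambda>n. mi_u S \<zeta> \<phi> n x))
           \<longleftrightarrow> (\<exists>R>0. \<forall>x\<in>{-R<..<R}. summable (\<lambda>n. \<bar>mi_u S \<zeta> \<phi> n x\<bar>)))"
proof -
  interpret market_impact S \<phi> \<zeta> "\<lambda>n. mi_u S \<zeta> \<phi> n x" "\<lambda>n. mi_s S \<zeta> \<phi> n x" for x
    using market_impact_mi[OF assms(1)] .
  have abs_summable: "summable (\<lambda>n. \<bar>mi_u S \<zeta> \<phi> n x\<bar>)" for x
    using summable_abs_u assms(2,3) by auto
  then have summable: "summable (\<lambda>n. mi_u S \<zeta> \<phi> n x)" for x
    by (rule summable_rabs_cancel)
  have "0 < mi_u S \<zeta> \<phi> 0 S" using assms(1) by (simp add: mi_u_def)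
  then have "\<phi> < 1" using phi_less_1 assms(3) by blast
  moreover have "\<exists>R>0. \<forall>x\<in>{-R<..<R}. summable (\<lambda>n. mi_u S \<zeta> \<phi> n x)"
    using summable by (intro exI[of _ 1]) simp
  moreover have "\<exists>R>0. \<forall>x\<in>{-R<..<R}. summable (\<lambda>n. \<bar>mi_u S \<zeta> \<phi> n x\<bar>)"
    using abs_summable by (intro exI[of _ 1]) simp
  ultimately show ?thesis unfolding admissible_trading_def by blast
qed

end
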